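(* Let $d\ge1$, $k\ge1$, and let $G=(V,D)$ be a $k$-fold $\mathcal{R}_d$-circuit with at most one technicolour vertex. Then $G$ is a trivial $k$-fold $\mathcal{R}_d$-circuit.
   Context: For a graph $G=(V,E)$ and a generic $p:V\to\mathbb{R}^d$ (coordinates algebraically independent over $\mathbb{Q}$), the rigidity matrix has a row for each $uv\in E$ with $p(u)-p(v)$ in the $d$ columns of $u$, $p(v)-p(u)$ in those of $v$, zeros elsewhere; $\mathcal{R}_d$ is its row matroid, with rank $r_d$. A set of edges is cyclic if it is a union of $\mathcal{R}_d$-circuits. $(V,D)$ is a $k$-fold $\mathcal{R}_d$-circuit if $D$ is cyclic and $r_d(D)=|D|-k$. Its principal partition is the partition $\{A_1,\dots,A_\ell\}$ of $D$ such that $\{D\setminus A_i\}$ is exactly the set of $(k-1)$-fold $\mathcal{R}_d$-circuits contained in $D$ (one always has $\ell\ge k$); it is trivial if $\ell=k$. A vertex is technicolour if it is incident with edges from at least two parts of the principal partition. *)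

theory Defs
  imports Complex_Main
begin

text \<open>A polynomial is a finite set M of distinct monomials
  (exponent vectors m supported in I) with rational coefficients c.\<close>
definition alg_indep_rat :: "'i set \<Rightarrow> ('i \<Rightarrow> real) \<Rightarrow> bool" where
  "alg_indep_rat I x \<longleftrightarrow>
     (\<forall>(M :: ('i \<Rightarrow> nat) set) (c :: ('i \<Rightarrow> nat) \<Rightarrow> rat).
        finite M \<and> (\<forall>m\<in>M. \<forall>i. i \<notin> I \<longrightarrow> m i = 0) \<and>
        (\<Sum>m\<in>M. of_rat (c m) * (\<Prod>i\<in>I. x i ^ m i)) = 0
        \<longrightarrow> (\<forall>m\<in>M. c m = 0))"

definition generic :: "nat \<Rightarrow> 'v set \<Rightarrow> ('v \<Rightarrow> nat \<Rightarrow> real) \<Rightarrow> bool" where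
  "generic d V p \<longleftrightarrow> alg_indep_rat (V \<times> {..<d}) (\<lambda>(v, i). p v i)"

text \<open>Edges are 2-element vertex sets. The row of the rigidity matrix for edge e = uv:
  in column (w,i) with w in e it is p w i - p x i, x the other endpoint; zero elsewhere.\<close>
definition rig_row :: "nat \<Rightarrow> ('v \<Rightarrow> nat \<Rightarrow> real) \<Rightarrow> 'v set \<Rightarrow> ('v \<times> nat) \<Rightarrow> real" where
  "rig_row d p e = (\<lambda>(w, i). if w \<in> e \<and> i < d then (\<Sum>x\<in>e. p w i - p x i) else 0)"

definition rig_indep :: "nat \<Rightarrow> ('v \<Rightarrow> nat \<Rightarrow> real) \<Rightarrow> 'v set set \<Rightarrow> bool" where
  "rig_indep d p F \<longleftrightarrow>
     (\<forall>c :: 'v set \<Rightarrow> real. (\<forall>w i. (\<Sum>e\<in>F. c e * rig_row d p e (w, i)) = 0)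
        \<longrightarrow> (\<forall>e\<in>F. c e = 0))"

definition rig_rank :: "nat \<Rightarrow> ('v \<Rightarrow> nat \<Rightarrow> real) \<Rightarrow> 'v set set \<Rightarrow> nat" where
  "rig_rank d p F = Max {card X | X. X \<subseteq> F \<and> rig_indep d p X}"

definition rig_circuit :: "nat \<Rightarrow> ('v \<Rightarrow> nat \<Rightarrow> real) \<Rightarrow> 'v set set \<Rightarrow> bool" where
  "rig_circuit d p C \<longleftrightarrow> \<not> rig_indep d p C \<and> (\<forall>e\<in>C. rig_indep d p (C - {e}))"

definition rig_cyclic :: "nat \<Rightarrow> ('v \<Rightarrow> nat \<Rightarrow> real) \<Rightarrow> 'v set set \<Rightarrow> bool" where
  "rig_cyclic d p D \<longleftrightarrow> D = \<Union>{C. C \<subseteq> D \<and> rig_circuit d p C}"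

definition kfold_circuit :: "nat \<Rightarrow> ('v \<Rightarrow> nat \<Rightarrow> real) \<Rightarrow> nat \<Rightarrow> 'v set set \<Rightarrow> bool" where
  "kfold_circuit d p k D \<longleftrightarrow>
     finite D \<and> rig_cyclic d p D \<and> int (rig_rank d p D) = int (card D) - int k"

definition principal_partition ::
  "nat \<Rightarrow> ('v \<Rightarrow> nat \<Rightarrow> real) \<Rightarrow> nat \<Rightarrow> 'v set set \<Rightarrow> 'v set set set \<Rightarrow> bool" where
  "principal_partition d p k D P \<longleftrightarrow>
     \<Union>P = D \<and> {} \<notin> P \<and> (\<forall>A\<in>P. \<forall>B\<in>P. A \<noteq> B \<longrightarrow> A \<inter> B = {}) \<and>
     {D - A | A. A \<in> P} = {D'. D' \<subseteq> D \<and> kfold_circuit d p (k - 1) D'}"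

definition technicolour :: "'v set set set \<Rightarrow> 'v \<Rightarrow> bool" where
  "technicolour P v \<longleftrightarrow>
     (\<exists>A\<in>P. \<exists>B\<in>P. A \<noteq> B \<and> (\<exists>e\<in>A. v \<in> e) \<and> (\<exists>e\<in>B. v \<in> e))"

end

theory Submission
  imports Defs
begin

text \<open>A vertex lying on edges of two different parts of the principal partition is
  technicolour, so the parts pairwise meet in at most one common vertex v. If edge sets
  Y and Z meet only in v, a self-stress of Y \<union> Z restricts to a self-stress of Y: the
  combination of the Y-rows equals minus that of the Z-rows, hence is supported on v
  alone, while for every coordinate its entries sum to zero over all vertices (each row
  does). So the rank is additive over the parts. As every D - A is a (k-1)-fold circuit,
  each part A then has rank |A| - 1, and summing gives rank D = |D| - |P|.\<close>

definition self_stress :: "nat \<Rightarrow> ('v \<Rightarrow> nat \<Rightarrow> real) \<Rightarrow> 'v set set \<Rightarrow> ('v set \<Rightarrow> real) \<Rightarrow> bool"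
  where "self_stress d p F c \<longleftrightarrow> (\<forall>w i. (\<Sum>e\<in>F. c e * rig_row d p e (w, i)) = 0)"

lemma rig_indep_iff_self_stress:
  "rig_indep d p F \<longleftrightarrow> (\<forall>c. self_stress d p F c \<longrightarrow> (\<forall>e\<in>F. c e = 0))"
  by (simp add: rig_indep_def self_stress_def)

lemma rig_row_outside: "w \<notin> e \<Longrightarrow> rig_row d p e (w, i) = 0"
  by (simp add: rig_row_def)

lemma rig_row_infinite: "infinite e \<Longrightarrow> rig_row d p e x = 0"
  by (simp add: rig_row_def split: prod.split)

lemma sum_rig_row_eq_0:
  assumes "finite W" "e \<subseteq> W"
  shows "(\<Sum>w\<in>W. rig_row d p e (w, i)) = 0"
proof (cases "i < d")
  case True
  have "finite e" using assms finite_subset by blast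
  have "(\<Sum>w\<in>W. rig_row d p e (w, i)) = (\<Sum>w\<in>e. \<Sum>x\<in>e. p w i - p x i)"
    using assms by (intro sum.mono_neutral_cong_right) (auto simp: rig_row_def True)
  also have "\<dots> = (\<Sum>w\<in>e. \<Sum>x\<in>e. p w i) - (\<Sum>w\<in>e. \<Sum>x\<in>e. p x i)"
    by (simp only: sum_subtractf)
  also have "(\<Sum>w\<in>e. \<Sum>x\<in>e. p x i) = (\<Sum>w\<in>e. \<Sum>x\<in>e. p w i)"
    by (rule sum.swap)
  finally show ?thesis by simp
qed (simp add: rig_row_def)

lemma rig_indep_finite:
  assumes "rig_indep d p F"
  shows "finite F"
proof (rule ccontr)
  assume "infinite F"
  then have "self_stress d p F (\<lambda>_. 1)" by (simp add: self_stress_def)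
  then have "F = {}" using assms by (auto simp: rig_indep_iff_self_stress)
  with \<open>infinite F\<close> show False by simp
qed

lemma rig_indep_edge_finite:
  assumes "rig_indep d p F" "e \<in> F"
  shows "finite e"
proof (rule ccontr)
  assume "infinite e"
  define c :: "'a set \<Rightarrow> real" where "c x = (if x = e then 1 else 0)" for x
  have "self_stress d p F c"
    unfolding self_stress_def by (auto simp: c_def rig_row_infinite[OF \<open>infinite e\<close>] intro!: sum.neutral)
  then have "c e = 0" using assms by (auto simp: rig_indep_iff_self_stress)
  then show False by (simp add: c_def)
qed

lemma rig_indep_subset:
  assumes "rig_indep d p S" "T \<subseteq> S"
  shows "rig_indep d p T"
  unfolding rig_indep_iff_self_stress
proof (intro allI impI)
  fix c assume "self_stress d p T c"
  define c' where "c' e = (if e \<in> T then c e else 0)" for e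
  have "(\<Sum>e\<in>S. c' e * rig_row d p e x) = (\<Sum>e\<in>T. c e * rig_row d p e x)" for x
    using rig_indep_finite[OF assms(1)] assms(2)
    by (intro sum.mono_neutral_cong_right) (auto simp: c'_def)
  then have "self_stress d p S c'"
    using \<open>self_stress d p T c\<close> by (simp add: self_stress_def)
  then have "\<forall>e\<in>S. c' e = 0"
    using assms(1) by (simp add: rig_indep_iff_self_stress)
  then show "\<forall>e\<in>T. c e = 0"
    using assms(2) unfolding c'_def by (metis subsetD)
qed

lemma self_stress_restrict_cut_vertex:
  assumes stress: "self_stress d p (Y \<union> Z) c"
    and fin: "finite Y" "finite Z" "\<forall>e\<in>Y. finite e"
    and disj: "Y \<inter> Z = {}" and cut: "\<Union>Y \<inter> \<Union>Z \<subseteq> {v}"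
  shows "self_stress d p Y c"
proof -
  define f where "f w i = (\<Sum>e\<in>Y. c e * rig_row d p e (w, i))" for w i
  have off_v: "f w i = 0" if "w \<noteq> v" for w i
  proof (cases "w \<in> \<Union>Y")
    case True
    then have "w \<notin> \<Union>Z" using that cut by blast
    then have "(\<Sum>e\<in>Z. c e * rig_row d p e (w, i)) = 0"
      by (auto simp: rig_row_outside intro!: sum.neutral)
    moreover have "f w i + (\<Sum>e\<in>Z. c e * rig_row d p e (w, i)) = 0"
      using stress sum.union_disjoint[OF fin(1,2) disj, symmetric]
      unfolding self_stress_def f_def by metis
    ultimately show ?thesis by simp
  next
    case False
    then show ?thesis by (auto simp: f_def rig_row_outside intro!: sum.neutral)
  qed
  define W where "W = insert v (\<Union>Y)"
  have "finite W" using fin by (simp add: W_def)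
  have edge_in_W: "e \<subseteq> W" if "e \<in> Y" for e
    using that by (auto simp: W_def)
  have "f v i = 0" for i
  proof -
    have "f v i = (\<Sum>w\<in>W. if w = v then f w i else 0)"
      using \<open>finite W\<close> by (simp add: W_def)
    also have "\<dots> = (\<Sum>w\<in>W. f w i)"
      using off_v by (intro sum.cong) auto
    also have "\<dots> = (\<Sum>e\<in>Y. c e * (\<Sum>w\<in>W. rig_row d p e (w, i)))"
      unfolding f_def sum_distrib_left by (rule sum.swap)
    also have "\<dots> = 0"
      by (intro sum.neutral) (simp add: edge_in_W sum_rig_row_eq_0[OF \<open>finite W\<close>])
    finally show ?thesis .
  qed
  with off_v show ?thesis
    unfolding self_stress_def f_def by metis
qed

lemma rig_indep_Un_cut_vertex:
  assumes "rig_indep d p Y" "rig_indep d p Z" "Y \<inter> Z = {}" "\<Union>Y \<inter> \<Union>Z \<subseteq> {v}"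
  shows "rig_indep d p (Y \<union> Z)"
  unfolding rig_indep_iff_self_stress
proof (intro allI impI)
  fix c assume stress: "self_stress d p (Y \<union> Z) c"
  have fin: "finite Y" "finite Z" "\<forall>e\<in>Y. finite e" "\<forall>e\<in>Z. finite e"
    using assms(1,2) rig_indep_finite rig_indep_edge_finite by blast+
  have "self_stress d p Y c"
    using self_stress_restrict_cut_vertex[OF stress fin(1-3) assms(3,4)] .
  moreover have "self_stress d p Z c"
    using self_stress_restrict_cut_vertex[of d p Z Y c] stress fin assms(3,4)
    by (simp add: Un_commute Int_commute)
  ultimately show "\<forall>e\<in>Y \<union> Z. c e = 0"
    using assms(1,2) by (auto simp: rig_indep_iff_self_stress)
qed

lemma finite_rig_rank_candidates:
  "finite F \<Longrightarrow> finite {card X | X. X \<subseteq> F \<and> rig_indep d p X}"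
  by (rule finite_subset[of _ "card ` Pow F"]) auto

lemma card_le_rig_rank:
  assumes "finite F" "S \<subseteq> F" "rig_indep d p S"
  shows "card S \<le> rig_rank d p F"
  unfolding rig_rank_def using assms by (intro Max_ge finite_rig_rank_candidates) auto

lemma rig_rank_basis:
  assumes "finite F"
  obtains S where "S \<subseteq> F" "rig_indep d p S" "card S = rig_rank d p F"
proof -
  have "rig_indep d p {}" by (simp add: rig_indep_def)
  then have "rig_rank d p F \<in> {card X | X. X \<subseteq> F \<and> rig_indep d p X}"
    unfolding rig_rank_def using assms by (intro Max_in finite_rig_rank_candidates) auto
  then show ?thesis using that by auto
qed

lemma rig_rank_empty [simp]: "rig_rank d p {} = 0"
proof -
  obtain S where "S \<subseteq> {}" "rig_indep d p S" "card S = rig_rank d p {}"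
    by (rule rig_rank_basis[OF finite.emptyI])
  then show ?thesis by simp
qed

lemma rig_rank_Un_le:
  assumes "finite Y" "finite Z"
  shows "rig_rank d p (Y \<union> Z) \<le> rig_rank d p Y + rig_rank d p Z"
proof -
  obtain S where S: "S \<subseteq> Y \<union> Z" "rig_indep d p S" "card S = rig_rank d p (Y \<union> Z)"
    using assms by (meson finite_UnI rig_rank_basis)
  have "card S = card ((S \<inter> Y) \<union> (S \<inter> Z))"
    by (rule arg_cong[where f = card]) (use S(1) in blast)
  also have "\<dots> \<le> card (S \<inter> Y) + card (S \<inter> Z)"
    by (rule card_Un_le)
  also have "\<dots> \<le> rig_rank d p Y + rig_rank d p Z"
    using assms S(2) rig_indep_subset[OF S(2)] by (intro add_mono card_le_rig_rank) auto
  finally show ?thesis using S(3) by simp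
qed

lemma rig_rank_Un_cut_vertex:
  assumes "finite Y" "finite Z" "Y \<inter> Z = {}" "\<Union>Y \<inter> \<Union>Z \<subseteq> {v}"
  shows "rig_rank d p (Y \<union> Z) = rig_rank d p Y + rig_rank d p Z"
proof (rule antisym)
  show "rig_rank d p (Y \<union> Z) \<le> rig_rank d p Y + rig_rank d p Z"
    using assms(1,2) by (rule rig_rank_Un_le)
  obtain S1 where S1: "S1 \<subseteq> Y" "rig_indep d p S1" "card S1 = rig_rank d p Y"
    using assms(1) by (rule rig_rank_basis)
  obtain S2 where S2: "S2 \<subseteq> Z" "rig_indep d p S2" "card S2 = rig_rank d p Z"
    using assms(2) by (rule rig_rank_basis)
  have "rig_indep d p (S1 \<union> S2)"
    using S1(1,2) S2(1,2) assms(3,4) by (intro rig_indep_Un_cut_vertex[of _ _ _ _ v]) blast+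
  then have "card (S1 \<union> S2) \<le> rig_rank d p (Y \<union> Z)"
    using assms(1,2) S1(1) S2(1) by (intro card_le_rig_rank) auto
  moreover have "card (S1 \<union> S2) = card S1 + card S2"
    using S1 S2 assms(3) by (intro card_Un_disjoint) (auto dest: rig_indep_finite)
  ultimately show "rig_rank d p Y + rig_rank d p Z \<le> rig_rank d p (Y \<union> Z)"
    using S1(3) S2(3) by simp
qed

lemma rig_rank_Union_cut_vertex:
  assumes "finite Q" "\<forall>A\<in>Q. finite A" "pairwise disjnt Q"
    and "\<forall>A\<in>Q. \<forall>B\<in>Q. A \<noteq> B \<longrightarrow> \<Union>A \<inter> \<Union>B \<subseteq> {v}"
  shows "rig_rank d p (\<Union>Q) = (\<Sum>A\<in>Q. rig_rank d p A)"
  using assms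
proof (induction Q rule: finite_induct)
  case (insert A Q)
  have "A \<inter> B = {} \<and> \<Union>A \<inter> \<Union>B \<subseteq> {v}" if "B \<in> Q" for B
  proof -
    have "A \<noteq> B" using that insert.hyps(2) by blast
    with that insert.prems(2,3) show ?thesis by (simp add: pairwise_def disjnt_def)
  qed
  then have "A \<inter> \<Union>Q = {}" and "\<Union>A \<inter> \<Union>(\<Union>Q) \<subseteq> {v}"
    by blast+
  then have "rig_rank d p (A \<union> \<Union>Q) = rig_rank d p A + rig_rank d p (\<Union>Q)"
    using insert.hyps(1) insert.prems(1) by (intro rig_rank_Un_cut_vertex) auto
  also have "rig_rank d p (\<Union>Q) = (\<Sum>B\<in>Q. rig_rank d p B)"
    using insert.prems by (intro insert.IH) (auto simp: pairwise_insert)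
  finally show ?case using insert.hyps by simp
qed simp

lemma principal_partition_parts:
  assumes "kfold_circuit d p k D" "principal_partition d p k D P"
  shows "\<Union>P = D" "finite P" "\<forall>A\<in>P. finite A" "pairwise disjnt P"
proof -
  show UP: "\<Union>P = D" and "pairwise disjnt P"
    using assms(2) by (auto simp: principal_partition_def pairwise_def disjnt_def)
  moreover have "finite D" using assms(1) by (simp add: kfold_circuit_def)
  ultimately show "finite P" "\<forall>A\<in>P. finite A"
    by (auto intro: finite_UnionD finite_subset[OF Union_upper])
qed

lemma principal_partition_complement:
  assumes "principal_partition d p k D P" "A \<in> P"
  shows "kfold_circuit d p (k - 1) (D - A)"
proof -
  have complements: "{D - A | A. A \<in> P} = {D'. D' \<subseteq> D \<and> kfold_circuit d p (k - 1) D'}"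
    using assms(1) by (simp add: principal_partition_def)
  have "D - A \<in> {D - A | A. A \<in> P}" using assms(2) by blast
  then show ?thesis unfolding complements by simp
qed

lemma card_principal_partition_if_rank_additive:
  assumes circuit: "kfold_circuit d p k D" and pp: "principal_partition d p k D P" and "k \<ge> 1"
    and additive: "\<And>Q. Q \<subseteq> P \<Longrightarrow> rig_rank d p (\<Union>Q) = (\<Sum>A\<in>Q. rig_rank d p A)"
  shows "card P = k"
proof -
  note parts = principal_partition_parts[OF circuit pp]
  have rank_D: "int (rig_rank d p D) = int (card D) - int k"
    using circuit by (simp add: kfold_circuit_def)
  have part_rank: "int (rig_rank d p A) = int (card A) - 1" if "A \<in> P" for A
  proof -
    have "D - A = \<Union>(P - {A})"
      using parts(1,4) that by (auto simp: pairwise_def disjnt_def)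
    then have "rig_rank d p D = rig_rank d p A + rig_rank d p (D - A)"
      using additive[of P] additive[of "P - {A}"] parts(1) sum.remove[OF parts(2) that] by simp
    moreover have "card D = card A + card (D - A)"
    proof -
      have "A \<subseteq> D" "finite A" using parts that by auto
      moreover have "finite D" using circuit by (simp add: kfold_circuit_def)
      ultimately show ?thesis using card_mono[of D A] card_Diff_subset[of A D] by linarith
    qed
    moreover have "int (rig_rank d p (D - A)) = int (card (D - A)) - int (k - 1)"
      using principal_partition_complement[OF pp that] by (simp add: kfold_circuit_def)
    ultimately show ?thesis using rank_D \<open>k \<ge> 1\<close> by linarith
  qed
  have "int (rig_rank d p D) = (\<Sum>A\<in>P. int (card A) - 1)"
    using additive[of P] parts(1) part_rank by simp
  also have "\<dots> = int (card D) - int (card P)"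
    using card_Union_disjoint[OF parts(4)] parts(1,3) by (simp add: sum_subtractf)
  finally show ?thesis using rank_D by linarith
qed

theorem proposition3p10:
  fixes d k :: nat and V :: "'v set" and D :: "'v set set"
    and p :: "'v \<Rightarrow> nat \<Rightarrow> real" and P :: "'v set set set"
  assumes "d \<ge> 1" and "k \<ge> 1"
    and "finite V"
    and "D \<subseteq> {e. e \<subseteq> V \<and> card e = 2}"
    and "generic d V p"
    and "kfold_circuit d p k D"
    and "principal_partition d p k D P"
    and "card {v \<in> V. technicolour P v} \<le> 1"
  shows "card P = k"
proof -
  note parts = principal_partition_parts[OF assms(6,7)]
  obtain v where technicolour_v: "{u \<in> V. technicolour P u} \<subseteq> {v}"
    using assms(8) card_le_Suc0_iff_eq[of "{u \<in> V. technicolour P u}"] assms(3)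
    by (cases "{u \<in> V. technicolour P u} = {}") auto
  have cut: "\<forall>A\<in>P. \<forall>B\<in>P. A \<noteq> B \<longrightarrow> \<Union>A \<inter> \<Union>B \<subseteq> {v}"
  proof (intro ballI impI subsetI)
    fix A B u assume "A \<in> P" "B \<in> P" "A \<noteq> B" "u \<in> \<Union>A \<inter> \<Union>B"
    then have "technicolour P u" and "u \<in> V"
      using parts(1) assms(4) unfolding technicolour_def by blast+
    then show "u \<in> {v}" using technicolour_v by blast
  qed
  show ?thesis
  proof (rule card_principal_partition_if_rank_additive[OF assms(6,7,2)])
    fix Q assume "Q \<subseteq> P"
    then have "finite Q" "\<forall>A\<in>Q. finite A" "pairwise disjnt Q"
      using parts(2-4) by (auto intro: finite_subset pairwise_subset)
    moreover have "\<forall>A\<in>Q. \<forall>B\<in>Q. A \<noteq> B \<longrightarrow> \<Union>A \<inter> \<Union>B \<subseteq> {v}"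
      using cut \<open>Q \<subseteq> P\<close> by blast
    ultimately show "rig_rank d p (\<Union>Q) = (\<Sum>A\<in>Q. rig_rank d p A)"
      by (rule rig_rank_Union_cut_vertex)
  qed
qed

end
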